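(* Consider an instance of the Steiner Team Orienteering Problem and the formulation $\mathcal{F}_1$ as described in the context, and let $\mathcal{K}$ be the set of conflicting vertex pairs. For every feasible solution $(x,y,z,\varphi)$ of $\mathcal{F}_1$ and every pair $\langle i,j\rangle\in\mathcal{K}$: (a) for every $V\subseteq N\setminus\{s\}$ with $\{i,j\}\subseteq V$, $\sum_{e\in\delta^-(V)}x_e\ge y_i+y_j$; and (b) for every $V\subseteq N\setminus\{t\}$ with $\{i,j\}\subseteq V$, $\sum_{e\in\delta^+(V)}x_e\ge y_i+y_j$.
   Context: An instance of the Steiner Team Orienteering Problem (STOP) consists of: a digraph $G=(N,A)$; an origin $s\in N$ and a destination $t\in N$ with $s\neq t$; disjoint sets $S,P\subseteq N\setminus\{s,t\}$ (mandatory and profitable vertices) with $N=S\cup P\cup\{s,t\}$; rewards $p_i\in\mathbb{Z}^+$ for $i\in P$; traverse times $d_{ij}\in\mathbb{R}^+$ for $(i,j)\in A$; a number $m$ of vehicles and a time limit $T$. For $i\in N$ let $\delta^+(i)=\{j\in N:(i,j)\in A\}$ and $\delta^-(i)=\{j\in N:(j,i)\in A\}$; for $V\subseteq N$ let $\delta^+(V)=\{(i,j)\in A: i\in V, j\in N\setminus V\}$ and $\delta^-(V)=\{(i,j)\in A: i\in N\setminus V, j\in V\}$. For $i,j\in N$, $R_{ij}$ denotes the minimum of $\sum_{a\in A_p}d_a$ over all paths $p$ from $i$ to $j$ in $G$ (with arc set $A_p$), and $R_{ii}=0$. $\mathcal{K}$ is the set of pairs $\langle i,j\rangle$ with $i,j\in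 N\setminus\{s,t\}$ such that every route from $s$ to $t$ in $G$ visiting both $i$ and $j$ (in any order) has total traverse time (sum of $d$ over its arcs) exceeding $T$. $\mathcal{F}_1$: maximize $\sum_{i\in P}p_iy_i$ over $x\in\{0,1\}^A$, $y\in\{0,1\}^N$, $z\in\mathbb{R}^A$, $\varphi\in\mathbb{R}$ subject to: $y_i=1$ for all $i\in S\cup\{s,t\}$; $\sum_{j\in\delta^+(i)}x_{ij}=y_i$ for all $i\in S\cup P$; $\sum_{j\in\delta^+(s)}x_{sj}=\sum_{i\in\delta^-(t)}x_{it}=m-\varphi$; $\sum_{i\in\delta^-(s)}x_{is}=\sum_{j\in\delta^+(t)}x_{tj}=0$; $\sum_{j\in\delta^+(i)}x_{ij}-\sum_{j\in\delta^-(i)}x_{ji}=0$ for all $i\in S\cup P$; $z_{sj}=d_{sj}x_{sj}$ for all $j\in\delta^+(s)$; $\sum_{j\in\delta^+(i)}z_{ij}-\sum_{j\in\delta^-(i)}z_{ji}=\sum_{j\in\delta^+(i)}d_{ij}x_{ij}$ for all $i\in S\cup P$; $z_{ij}\le(T-R_{jt})x_{ij}$ and $z_{ij}\ge(R_{si}+d_{ij})x_{ij}$ for all $(i,j)\in A$; $z\ge0$; $0\le\varphi\le m$. *)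

theory Defs
  imports "HOL-Library.Extended_Real"
begin

definition is_walk :: "('v \<times> 'v) set \<Rightarrow> 'v list \<Rightarrow> bool" where
  "is_walk A vs \<longleftrightarrow> vs \<noteq> [] \<and> (\<forall>k. Suc k < length vs \<longrightarrow> (vs ! k, vs ! Suc k) \<in> A)"

definition is_path :: "('v \<times> 'v) set \<Rightarrow> 'v \<Rightarrow> 'v \<Rightarrow> 'v list \<Rightarrow> bool" where
  "is_path A i j vs \<longleftrightarrow> is_walk A vs \<and> distinct vs \<and> hd vs = i \<and> last vs = j"

definition walk_cost :: "('v \<times> 'v \<Rightarrow> real) \<Rightarrow> 'v list \<Rightarrow> real" where
  "walk_cost d vs = (\<Sum>k<length vs - 1. d (vs ! k, vs ! Suc k))"

text \<open>Shortest path times R_ij (infinite if j is unreachable from i), with R_ii = 0.\<close>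
definition Rdist :: "('v \<times> 'v) set \<Rightarrow> ('v \<times> 'v \<Rightarrow> real) \<Rightarrow> 'v \<Rightarrow> 'v \<Rightarrow> ereal" where
  "Rdist A d i j = (if i = j then 0
     else Inf {ereal (walk_cost d p) | p. is_path A i j p})"

definition out_nbrs :: "'v set \<Rightarrow> ('v \<times> 'v) set \<Rightarrow> 'v \<Rightarrow> 'v set" where
  "out_nbrs N A i = {j \<in> N. (i, j) \<in> A}"

definition in_nbrs :: "'v set \<Rightarrow> ('v \<times> 'v) set \<Rightarrow> 'v \<Rightarrow> 'v set" where
  "in_nbrs N A i = {j \<in> N. (j, i) \<in> A}"

definition delta_out :: "'v set \<Rightarrow> ('v \<times> 'v) set \<Rightarrow> 'v set \<Rightarrow> ('v \<times> 'v) set" where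
  "delta_out N A V = {(i, j) \<in> A. i \<in> V \<and> j \<in> N - V}"

definition delta_in :: "'v set \<Rightarrow> ('v \<times> 'v) set \<Rightarrow> 'v set \<Rightarrow> ('v \<times> 'v) set" where
  "delta_in N A V = {(i, j) \<in> A. i \<in> N - V \<and> j \<in> V}"

definition stop_instance ::
  "'v set \<Rightarrow> ('v \<times> 'v) set \<Rightarrow> 'v \<Rightarrow> 'v \<Rightarrow> 'v set \<Rightarrow> 'v set \<Rightarrow> ('v \<Rightarrow> int)
   \<Rightarrow> ('v \<times> 'v \<Rightarrow> real) \<Rightarrow> nat \<Rightarrow> real \<Rightarrow> bool" where
  "stop_instance N A s t S P p d m T \<longleftrightarrow>
     finite N \<and> A \<subseteq> N \<times> N \<and> s \<in> N \<and> t \<in> N \<and> s \<noteq> t \<and>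
     S \<subseteq> N - {s, t} \<and> P \<subseteq> N - {s, t} \<and> S \<inter> P = {} \<and> N = S \<union> P \<union> {s, t} \<and>
     (\<forall>i\<in>P. p i > 0) \<and> (\<forall>a\<in>A. d a > 0)"

definition conflict_pairs ::
  "'v set \<Rightarrow> ('v \<times> 'v) set \<Rightarrow> 'v \<Rightarrow> 'v \<Rightarrow> ('v \<times> 'v \<Rightarrow> real) \<Rightarrow> real \<Rightarrow> ('v \<times> 'v) set" where
  "conflict_pairs N A s t d T =
     {(i, j). i \<in> N - {s, t} \<and> j \<in> N - {s, t} \<and>
        (\<forall>r. is_path A s t r \<and> i \<in> set r \<and> j \<in> set r \<longrightarrow> walk_cost d r > T)}"

definition F1_feasible ::
  "'v set \<Rightarrow> ('v \<times> 'v) set \<Rightarrow> 'v \<Rightarrow> 'v \<Rightarrow> 'v set \<Rightarrow> 'v set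
   \<Rightarrow> ('v \<times> 'v \<Rightarrow> real) \<Rightarrow> nat \<Rightarrow> real
   \<Rightarrow> ('v \<times> 'v \<Rightarrow> real) \<Rightarrow> ('v \<Rightarrow> real) \<Rightarrow> ('v \<times> 'v \<Rightarrow> real) \<Rightarrow> real \<Rightarrow> bool" where
  "F1_feasible N A s t S P d m T x y z \<phi> \<longleftrightarrow>
     (\<forall>a\<in>A. x a \<in> {0, 1}) \<and> (\<forall>i\<in>N. y i \<in> {0, 1}) \<and>
     (\<forall>i\<in>S \<union> {s, t}. y i = 1) \<and>
     (\<forall>i\<in>S \<union> P. (\<Sum>j\<in>out_nbrs N A i. x (i, j)) = y i) \<and>
     (\<Sum>j\<in>out_nbrs N A s. x (s, j)) = real m - \<phi> \<and>
     (\<Sum>i\<in>in_nbrs N A t. x (i, t)) = real m - \<phi> \<and>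
     (\<Sum>i\<in>in_nbrs N A s. x (i, s)) = 0 \<and>
     (\<Sum>j\<in>out_nbrs N A t. x (t, j)) = 0 \<and>
     (\<forall>i\<in>S \<union> P. (\<Sum>j\<in>out_nbrs N A i. x (i, j)) - (\<Sum>j\<in>in_nbrs N A i. x (j, i)) = 0) \<and>
     (\<forall>j\<in>out_nbrs N A s. z (s, j) = d (s, j) * x (s, j)) \<and>
     (\<forall>i\<in>S \<union> P. (\<Sum>j\<in>out_nbrs N A i. z (i, j)) - (\<Sum>j\<in>in_nbrs N A i. z (j, i))
                   = (\<Sum>j\<in>out_nbrs N A i. d (i, j) * x (i, j))) \<and>
     (\<forall>(i, j)\<in>A. ereal (z (i, j)) \<le> (ereal T - Rdist A d j t) * ereal (x (i, j)) \<and>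
                  ereal (z (i, j)) \<ge> (Rdist A d s i + ereal (d (i, j))) * ereal (x (i, j))) \<and>
     (\<forall>a\<in>A. z a \<ge> 0) \<and>
     0 \<le> \<phi> \<and> \<phi> \<le> real m"

end

theory Submission
  imports Defs
begin

text \<open>The arcs used by a feasible solution form routes from s to t that share no inner vertex:
  an inner vertex has at most one used entering and one used leaving arc, and z strictly increases
  along used arcs, which excludes cycles. Summing the z-balances along a route shows that its
  duration is at most T, so no route visits both vertices of a conflicting pair. A vertex i with
  y i = 1 lies on a route, which crosses the cut because s \<notin> V (resp. t \<notin> V); routes
  sharing an arc coincide, so the routes through i and j cross it on distinct arcs.\<close>

definition walk_arcs :: "'v list \<Rightarrow> ('v \<times> 'v) set" where
  "walk_arcs vs = set (zip vs (tl vs))"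

lemma walk_arcs_Nil [simp]: "walk_arcs [] = {}"
  and walk_arcs_singleton [simp]: "walk_arcs [v] = {}"
  and walk_arcs_Cons_Cons [simp]: "walk_arcs (u # v # vs) = insert (u, v) (walk_arcs (v # vs))"
  by (simp_all add: walk_arcs_def)

lemma walk_arcs_conv_nth: "walk_arcs vs = {(vs ! k, vs ! Suc k) | k. Suc k < length vs}"
  unfolding walk_arcs_def set_zip by (auto simp: nth_tl)

lemma walk_arcs_Cons: "vs \<noteq> [] \<Longrightarrow> walk_arcs (u # vs) = insert (u, hd vs) (walk_arcs vs)"
  by (cases vs) auto

lemma walk_arcs_append:
  "as \<noteq> [] \<Longrightarrow> bs \<noteq> [] \<Longrightarrow>
    walk_arcs (as @ bs) = walk_arcs as \<union> {(last as, hd bs)} \<union> walk_arcs bs"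
  by (induction as rule: induct_list012) (auto simp: walk_arcs_Cons)

lemma walk_arcs_rev: "walk_arcs (rev vs) = converse (walk_arcs vs)"
proof (induction vs)
  case (Cons u vs)
  then show ?case
    by (cases "vs = []") (auto simp: walk_arcs_append walk_arcs_Cons last_rev)
qed simp

lemma walk_arcs_subset: "walk_arcs vs \<subseteq> set vs \<times> set vs"
  by (induction vs rule: induct_list012) auto

lemma walk_arcs_split:
  "e \<in> walk_arcs vs \<Longrightarrow> \<exists>as bs. vs = as @ bs \<and> as \<noteq> [] \<and> bs \<noteq> [] \<and> e = (last as, hd bs)"
proof (induction vs)
  case (Cons u vs)
  then have "vs \<noteq> []" by auto
  then consider "e = (u, hd vs)" | "e \<in> walk_arcs vs"
    using Cons.prems by (auto simp: walk_arcs_Cons)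
  then show ?case
  proof cases
    case 1
    then show ?thesis using \<open>vs \<noteq> []\<close> by (intro exI[of _ "[u]"] exI[of _ vs]) auto
  next
    case 2
    then obtain as bs where "vs = as @ bs" "as \<noteq> []" "bs \<noteq> []" "e = (last as, hd bs)"
      using Cons.IH by blast
    then show ?thesis by (intro exI[of _ "u # as"] exI[of _ bs]) auto
  qed
qed simp

lemma walk_arcs_enter:
  "hd vs \<notin> V \<Longrightarrow> v \<in> set vs \<Longrightarrow> v \<in> V \<Longrightarrow> \<exists>(a, b) \<in> walk_arcs vs. a \<notin> V \<and> b \<in> V"
proof (induction vs)
  case (Cons u vs)
  then have "vs \<noteq> []" "v \<in> set vs" by auto
  then show ?case
    using Cons by (cases "hd vs \<in> V") (auto simp: walk_arcs_Cons)
qed simp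

lemma walk_arcs_leave:
  "v \<in> set vs \<Longrightarrow> v \<in> V \<Longrightarrow> last vs \<notin> V \<Longrightarrow> \<exists>(a, b) \<in> walk_arcs vs. a \<in> V \<and> b \<notin> V"
  using walk_arcs_enter[of "rev vs" V v] by (auto simp: walk_arcs_rev hd_rev)

lemma is_walk_iff_walk_arcs: "is_walk A vs \<longleftrightarrow> vs \<noteq> [] \<and> walk_arcs vs \<subseteq> A"
  unfolding is_walk_def walk_arcs_conv_nth by blast

lemma is_walk_Cons: "vs \<noteq> [] \<Longrightarrow> is_walk A (v # vs) \<longleftrightarrow> (v, hd vs) \<in> A \<and> is_walk A vs"
  by (simp add: is_walk_iff_walk_arcs walk_arcs_Cons)

lemma is_walk_append:
  "as \<noteq> [] \<Longrightarrow> bs \<noteq> [] \<Longrightarrow>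
    is_walk A (as @ bs) \<longleftrightarrow> is_walk A as \<and> (last as, hd bs) \<in> A \<and> is_walk A bs"
  by (auto simp: is_walk_iff_walk_arcs walk_arcs_append)

lemma is_walk_snoc: "vs \<noteq> [] \<Longrightarrow> is_walk A (vs @ [v]) \<longleftrightarrow> is_walk A vs \<and> (last vs, v) \<in> A"
  using is_walk_append[of vs "[v]"] by (simp add: is_walk_iff_walk_arcs)

lemma is_walk_rev: "is_walk A (rev vs) \<longleftrightarrow> is_walk (converse A) vs"
  by (auto simp: is_walk_iff_walk_arcs walk_arcs_rev)

lemma is_walk_mono: "is_walk A vs \<Longrightarrow> A \<subseteq> B \<Longrightarrow> is_walk B vs"
  by (auto simp: is_walk_iff_walk_arcs)

lemma walk_cost_snoc: "vs \<noteq> [] \<Longrightarrow> walk_cost d (vs @ [v]) = walk_cost d vs + d (last vs, v)"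
proof -
  assume "vs \<noteq> []"
  then obtain n where n: "length vs = Suc n" by (cases vs) auto
  have "(\<Sum>k<n. d ((vs @ [v]) ! k, (vs @ [v]) ! Suc k)) = walk_cost d vs"
    unfolding walk_cost_def using n by (intro sum.cong) (auto simp: nth_append)
  then show ?thesis
    using n \<open>vs \<noteq> []\<close> by (simp add: walk_cost_def nth_append last_conv_nth)
qed

lemma sum_01_eq_card:
  fixes f :: "'a \<Rightarrow> real"
  assumes "finite B" "\<And>b. b \<in> B \<Longrightarrow> f b \<in> {0, 1}"
  shows "sum f B = card {b \<in> B. f b = 1}"
proof -
  have "sum f B = sum f {b \<in> B. f b = 1}"
    using assms by (intro sum.mono_neutral_right) auto
  then show ?thesis by simp
qed

text \<open>U is the support of a 0/1 flow from s to t in which every other vertex carries at most one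
  unit. The potential h serves only to exclude cycles; for solutions of F1 it is the time variable z.\<close>

locale unit_flow =
  fixes U :: "('v \<times> 'v) set" and s t :: 'v and h :: "'v \<times> 'v \<Rightarrow> real"
  assumes finite_arcs: "finite U"
    and no_arc_into_source: "(u, s) \<notin> U"
    and no_arc_out_of_sink: "(t, w) \<notin> U"
    and in_arc_unique: "(u, v) \<in> U \<Longrightarrow> (u', v) \<in> U \<Longrightarrow> v \<noteq> t \<Longrightarrow> u = u'"
    and out_arc_unique: "(v, w) \<in> U \<Longrightarrow> (v, w') \<in> U \<Longrightarrow> v \<noteq> s \<Longrightarrow> w = w'"
    and arc_continues: "(u, v) \<in> U \<Longrightarrow> v \<noteq> t \<Longrightarrow> \<exists>w. (v, w) \<in> U"
    and arc_preceded: "(v, w) \<in> U \<Longrightarrow> v \<noteq> s \<Longrightarrow> \<exists>u. (u, v) \<in> U"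
    and potential_increasing: "(u, v) \<in> U \<Longrightarrow> (v, w) \<in> U \<Longrightarrow> h (u, v) < h (v, w)"
begin

definition route :: "'v list \<Rightarrow> bool" where
  "route r \<longleftrightarrow> is_walk U r \<and> hd r = s \<and> last r = t"

lemma walk_arcs_route: "route r \<Longrightarrow> walk_arcs r \<subseteq> U"
  by (simp add: route_def is_walk_iff_walk_arcs)

lemma unit_flow_converse: "unit_flow (converse U) t s (\<lambda>(v, u). - h (u, v))"
  by unfold_locales
    (use finite_arcs no_arc_into_source no_arc_out_of_sink in_arc_unique out_arc_unique
      arc_continues arc_preceded potential_increasing in force)+

lemma walk_to_sink: "(u, v) \<in> U \<Longrightarrow> \<exists>q. is_walk U q \<and> hd q = v \<and> last q = t"
proof (induction "card {a \<in> U. h (u, v) < h a}" arbitrary: u v rule: less_induct)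
  case less
  show ?case
  proof (cases "v = t")
    case True
    then show ?thesis by (intro exI[of _ "[t]"]) (simp add: is_walk_def)
  next
    case False
    then obtain w where w: "(v, w) \<in> U" using arc_continues less.prems by blast
    have "{a \<in> U. h (v, w) < h a} \<subset> {a \<in> U. h (u, v) < h a}"
      using potential_increasing[OF less.prems w] w by auto
    then have "card {a \<in> U. h (v, w) < h a} < card {a \<in> U. h (u, v) < h a}"
      using finite_arcs by (intro psubset_card_mono) auto
    then obtain q where "is_walk U q" "hd q = w" "last q = t"
      using less.hyps w by blast
    moreover from this have "q \<noteq> []" by (auto simp: is_walk_def)
    ultimately show ?thesis
      using w by (intro exI[of _ "v # q"]) (simp add: is_walk_Cons)
  qed
qed

lemma walk_from_source: "(u, v) \<in> U \<Longrightarrow> \<exists>p. is_walk U p \<and> hd p = s \<and> last p = u"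
proof -
  assume "(u, v) \<in> U"
  interpret rev: unit_flow "converse U" t s "\<lambda>(v, u). - h (u, v)"
    by (rule unit_flow_converse)
  obtain q where "is_walk (converse U) q" "hd q = u" "last q = s"
    using rev.walk_to_sink[of v u] \<open>(u, v) \<in> U\<close> by blast
  moreover from this have "q \<noteq> []" by (auto simp: is_walk_def)
  ultimately show ?thesis
    by (intro exI[of _ "rev q"]) (simp add: is_walk_rev hd_rev last_rev)
qed

lemma route_through_arc: "e \<in> U \<Longrightarrow> \<exists>r. route r \<and> e \<in> walk_arcs r"
proof -
  assume "e \<in> U"
  then obtain u v where e: "e = (u, v)" "(u, v) \<in> U" by (cases e) auto
  obtain p where p: "is_walk U p" "hd p = s" "last p = u"
    using walk_from_source[OF e(2)] by blast
  obtain q where q: "is_walk U q" "hd q = v" "last q = t"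
    using walk_to_sink[OF e(2)] by blast
  have "p \<noteq> []" "q \<noteq> []" using p(1) q(1) by (auto simp: is_walk_def)
  then show ?thesis
    using p q e by (intro exI[of _ "p @ q"]) (simp add: route_def is_walk_append walk_arcs_append)
qed

lemma potential_increasing_along_walk:
  assumes "is_walk U vs" "i < j" "Suc j < length vs"
  shows "h (vs ! i, vs ! Suc i) < h (vs ! j, vs ! Suc j)"
  using assms(2,3)
proof (induction j)
  case (Suc j)
  have "(vs ! j, vs ! Suc j) \<in> U" "(vs ! Suc j, vs ! Suc (Suc j)) \<in> U"
    using assms(1) Suc.prems by (auto simp: is_walk_def)
  then have "h (vs ! j, vs ! Suc j) < h (vs ! Suc j, vs ! Suc (Suc j))"
    by (rule potential_increasing)
  then show ?case
    using Suc by (cases "i = j") auto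
qed simp

lemma walk_from_source_distinct:
  assumes walk: "is_walk U vs" and "hd vs = s"
  shows "distinct vs"
proof -
  have "vs ! a \<noteq> vs ! b" if "a < b" "b < length vs" for a b
  proof
    assume eq: "vs ! a = vs ! b"
    have into_b: "(vs ! (b - 1), vs ! b) \<in> U"
      using walk that unfolding is_walk_def by (metis Suc_pred' gr_zeroI not_less0)
    show False
    proof (cases a)
      case 0
      then have "vs ! b = s"
        using eq walk \<open>hd vs = s\<close> by (simp add: hd_conv_nth is_walk_def)
      then show False using into_b no_arc_into_source by simp
    next
      case (Suc a')
      have "(vs ! a', vs ! a) \<in> U" "(vs ! a, vs ! Suc a) \<in> U"
        using walk that Suc unfolding is_walk_def by auto
      then have "vs ! a' = vs ! (b - 1)"
        using in_arc_unique into_b eq no_arc_out_of_sink by metis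
      then have "h (vs ! a', vs ! Suc a') = h (vs ! (b - 1), vs ! Suc (b - 1))"
        using Suc eq that by simp
      moreover have "h (vs ! a', vs ! Suc a') < h (vs ! (b - 1), vs ! Suc (b - 1))"
        using Suc that by (intro potential_increasing_along_walk[OF walk]) auto
      ultimately show False by simp
    qed
  qed
  then show ?thesis
    unfolding distinct_conv_nth by (metis linorder_neqE_nat)
qed

lemma walks_from_source_eq:
  "is_walk U p \<Longrightarrow> is_walk U q \<Longrightarrow> hd p = s \<Longrightarrow> hd q = s \<Longrightarrow> last p = last q \<Longrightarrow> last p \<noteq> t
    \<Longrightarrow> p = q"
proof (induction p arbitrary: q rule: rev_induct)
  case (snoc v p)
  obtain q' where q: "q = q' @ [v]"
    using snoc.prems(2,5) by (cases q rule: rev_cases) (auto simp: is_walk_def)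
  show ?case
  proof (cases "p = []")
    case True
    then have "v = s" using snoc.prems by simp
    then have "q' = []"
      using snoc.prems(2) q no_arc_into_source by (cases "q' = []") (auto simp: is_walk_snoc)
    then show ?thesis using q True by simp
  next
    case False
    then have p: "is_walk U p" "(last p, v) \<in> U"
      using snoc.prems(1) by (auto simp: is_walk_snoc)
    then have "q' \<noteq> []"
      using snoc.prems(4) q no_arc_into_source by auto
    then have q': "is_walk U q'" "(last q', v) \<in> U"
      using snoc.prems(2) q by (auto simp: is_walk_snoc)
    have "last p = last q'"
      using in_arc_unique[OF p(2) q'(2)] snoc.prems(6) by simp
    moreover have "last p \<noteq> t"
      using p(2) no_arc_out_of_sink by blast
    ultimately have "p = q'"
      using snoc.IH[OF p(1) q'(1)] snoc.prems(3,4) q False \<open>q' \<noteq> []\<close> by simp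
    then show ?thesis using q by simp
  qed
qed (simp add: is_walk_def)

lemma walks_to_sink_eq:
  assumes "is_walk U p" "is_walk U q" "last p = t" "last q = t" "hd p = hd q" "hd p \<noteq> s"
  shows "p = q"
proof -
  interpret rev: unit_flow "converse U" t s "\<lambda>(v, u). - h (u, v)"
    by (rule unit_flow_converse)
  have "p \<noteq> []" "q \<noteq> []" using assms(1,2) by (auto simp: is_walk_def)
  then have "rev p = rev q"
    using assms by (intro rev.walks_from_source_eq) (simp_all add: is_walk_rev hd_rev last_rev)
  then show ?thesis by simp
qed

lemma routes_eq_if_common_arc:
  assumes "route r" "route r'" "e \<in> walk_arcs r" "e \<in> walk_arcs r'"
  shows "r = r'"
proof -
  obtain p q where r: "r = p @ q" "p \<noteq> []" "q \<noteq> []" "e = (last p, hd q)"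
    using walk_arcs_split[OF assms(3)] by blast
  obtain p' q' where r': "r' = p' @ q'" "p' \<noteq> []" "q' \<noteq> []" "e = (last p', hd q')"
    using walk_arcs_split[OF assms(4)] by blast
  have walks: "is_walk U p" "is_walk U q" "is_walk U p'" "is_walk U q'" "e \<in> U"
    using assms(1,2) r r' by (auto simp: route_def is_walk_append)
  have "p = p'"
    using walks assms(1,2) r r' no_arc_out_of_sink
    by (intro walks_from_source_eq) (auto simp: route_def)
  moreover have "q = q'"
    using walks assms(1,2) r r' no_arc_into_source
    by (intro walks_to_sink_eq) (auto simp: route_def)
  ultimately show ?thesis using r r' by simp
qed

lemma card_routed_le_card_cut:
  assumes meets: "\<And>r v. route r \<Longrightarrow> v \<in> W \<Longrightarrow> v \<in> set r \<Longrightarrow> walk_arcs r \<inter> C \<noteq> {}"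
    and separated: "\<And>r v w. route r \<Longrightarrow> v \<in> W \<Longrightarrow> w \<in> W \<Longrightarrow> v \<in> set r \<Longrightarrow> w \<in> set r \<Longrightarrow> v = w"
  shows "card {v \<in> W. \<exists>r. route r \<and> v \<in> set r} \<le> card (C \<inter> U)"
    (is "card ?R \<le> _")
proof -
  have "\<forall>v\<in>?R. \<exists>e. \<exists>r. route r \<and> v \<in> set r \<and> e \<in> walk_arcs r \<inter> C"
    using meets by blast
  then obtain f where f: "\<forall>v\<in>?R. \<exists>r. route r \<and> v \<in> set r \<and> f v \<in> walk_arcs r \<inter> C"
    by (rule bchoice[THEN exE])
  have "inj_on f ?R"
  proof (rule inj_onI)
    fix v w assume v: "v \<in> ?R" and w: "w \<in> ?R" and "f v = f w"
    obtain r where r: "route r" "v \<in> set r" "f v \<in> walk_arcs r"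
      using f v by blast
    obtain r' where r': "route r'" "w \<in> set r'" "f v \<in> walk_arcs r'"
      using f w \<open>f v = f w\<close> by auto
    have "r = r'" using routes_eq_if_common_arc r r' by blast
    then show "v = w" using separated r r' v w by blast
  qed
  moreover have "f ` ?R \<subseteq> C \<inter> U"
    using f walk_arcs_route by blast
  ultimately show ?thesis
    using finite_arcs by (intro card_inj_on_le) auto
qed

end

definition used_arcs :: "('v \<times> 'v) set \<Rightarrow> ('v \<times> 'v \<Rightarrow> real) \<Rightarrow> ('v \<times> 'v) set" where
  "used_arcs A x = {a \<in> A. x a = 1}"

locale F1_solution =
  fixes N :: "'v set" and A :: "('v \<times> 'v) set" and s t :: 'v and S P :: "'v set"
    and p :: "'v \<Rightarrow> int" and d :: "'v \<times> 'v \<Rightarrow> real" and m :: nat and T :: real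
    and x :: "'v \<times> 'v \<Rightarrow> real" and y :: "'v \<Rightarrow> real" and z :: "'v \<times> 'v \<Rightarrow> real" and \<phi> :: real
  assumes stop: "stop_instance N A s t S P p d m T"
    and feasible: "F1_feasible N A s t S P d m T x y z \<phi>"
begin

lemma finite_nodes: "finite N"
  and arcs_subset: "A \<subseteq> N \<times> N"
  and source_ne_sink: "s \<noteq> t"
  and nodes_eq: "N = S \<union> P \<union> {s, t}"
  and traverse_time_pos: "a \<in> A \<Longrightarrow> d a > 0"
  using stop unfolding stop_instance_def by blast+

lemma x_01: "a \<in> A \<Longrightarrow> x a \<in> {0, 1}"
  and y_01: "i \<in> N \<Longrightarrow> y i \<in> {0, 1}"
  and out_degree_inner: "i \<in> S \<union> P \<Longrightarrow> (\<Sum>j\<in>out_nbrs N A i. x (i, j)) = y i"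
  and in_degree_source: "(\<Sum>i\<in>in_nbrs N A s. x (i, s)) = 0"
  and out_degree_sink: "(\<Sum>j\<in>out_nbrs N A t. x (t, j)) = 0"
  and flow_conservation:
    "i \<in> S \<union> P \<Longrightarrow> (\<Sum>j\<in>out_nbrs N A i. x (i, j)) - (\<Sum>j\<in>in_nbrs N A i. x (j, i)) = 0"
  and z_source_arc: "j \<in> out_nbrs N A s \<Longrightarrow> z (s, j) = d (s, j) * x (s, j)"
  and z_conservation: "i \<in> S \<union> P \<Longrightarrow>
     (\<Sum>j\<in>out_nbrs N A i. z (i, j)) - (\<Sum>j\<in>in_nbrs N A i. z (j, i))
       = (\<Sum>j\<in>out_nbrs N A i. d (i, j) * x (i, j))"
  and z_upper: "(i, j) \<in> A \<Longrightarrow> ereal (z (i, j)) \<le> (ereal T - Rdist A d j t) * ereal (x (i, j))"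
  and z_nonneg: "a \<in> A \<Longrightarrow> z a \<ge> 0"
  using feasible unfolding F1_feasible_def by blast+

lemma finite_instance_arcs: "finite A"
  using finite_nodes arcs_subset by (meson finite_SigmaI finite_subset)

lemma finite_nbrs: "finite (out_nbrs N A i)" "finite (in_nbrs N A i)"
  using finite_nodes unfolding out_nbrs_def in_nbrs_def by auto

lemma used_arc_nodes: "(u, v) \<in> used_arcs A x \<Longrightarrow> u \<in> N \<and> v \<in> N"
  using arcs_subset by (auto simp: used_arcs_def)

lemma out_degree_eq_card: "(\<Sum>j\<in>out_nbrs N A i. x (i, j)) = card {j. (i, j) \<in> used_arcs A x}"
proof -
  have "{j \<in> out_nbrs N A i. x (i, j) = 1} = {j. (i, j) \<in> used_arcs A x}"
    using arcs_subset by (auto simp: out_nbrs_def used_arcs_def)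
  then show ?thesis
    using finite_nbrs x_01 by (subst sum_01_eq_card) (auto simp: out_nbrs_def)
qed

lemma in_degree_eq_card: "(\<Sum>j\<in>in_nbrs N A i. x (j, i)) = card {j. (j, i) \<in> used_arcs A x}"
proof -
  have "{j \<in> in_nbrs N A i. x (j, i) = 1} = {j. (j, i) \<in> used_arcs A x}"
    using arcs_subset by (auto simp: in_nbrs_def used_arcs_def)
  then show ?thesis
    using finite_nbrs x_01 by (subst sum_01_eq_card) (auto simp: in_nbrs_def)
qed

lemma finite_used_nbrs: "finite {j. (i, j) \<in> used_arcs A x}" "finite {j. (j, i) \<in> used_arcs A x}"
  using used_arc_nodes finite_nodes by (auto intro: finite_subset)

lemma inner_used_degrees:
  assumes "i \<in> S \<union> P"
  shows "card {j. (j, i) \<in> used_arcs A x} = y i" "card {j. (i, j) \<in> used_arcs A x} = y i"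
  using out_degree_inner[OF assms] flow_conservation[OF assms]
  by (simp_all add: in_degree_eq_card out_degree_eq_card)

lemma no_used_arc_into_source: "(u, s) \<notin> used_arcs A x"
  using in_degree_source finite_used_nbrs by (auto simp: in_degree_eq_card)

lemma no_used_arc_out_of_sink: "(t, w) \<notin> used_arcs A x"
  using out_degree_sink finite_used_nbrs by (auto simp: out_degree_eq_card)

lemma inner_at_most_one_used_arc:
  assumes "i \<in> S \<union> P"
  shows "card {j. (j, i) \<in> used_arcs A x} \<le> 1" "card {j. (i, j) \<in> used_arcs A x} \<le> 1"
  using inner_used_degrees[OF assms] y_01[of i] assms nodes_eq by auto

lemma used_arc_head_inner: "(u, v) \<in> used_arcs A x \<Longrightarrow> v \<noteq> t \<Longrightarrow> v \<in> S \<union> P"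
  using used_arc_nodes no_used_arc_into_source nodes_eq by blast

lemma used_arc_tail_inner: "(v, w) \<in> used_arcs A x \<Longrightarrow> v \<noteq> s \<Longrightarrow> v \<in> S \<union> P"
  using used_arc_nodes no_used_arc_out_of_sink nodes_eq by blast

lemma used_in_arc_unique:
  assumes "(u, v) \<in> used_arcs A x" "(u', v) \<in> used_arcs A x" "v \<noteq> t"
  shows "u = u'"
proof -
  have "card {j. (j, v) \<in> used_arcs A x} \<le> Suc 0"
    using inner_at_most_one_used_arc(1)[OF used_arc_head_inner[OF assms(1,3)]] by simp
  then show ?thesis
    using assms(1,2) by (simp add: card_le_Suc0_iff_eq[OF finite_used_nbrs(2)])
qed

lemma used_out_arc_unique:
  assumes "(v, w) \<in> used_arcs A x" "(v, w') \<in> used_arcs A x" "v \<noteq> s"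
  shows "w = w'"
proof -
  have "card {j. (v, j) \<in> used_arcs A x} \<le> Suc 0"
    using inner_at_most_one_used_arc(2)[OF used_arc_tail_inner[OF assms(1,3)]] by simp
  then show ?thesis
    using assms(1,2) by (simp add: card_le_Suc0_iff_eq[OF finite_used_nbrs(1)])
qed

lemma used_in_card_eq_out_card:
  "v \<in> S \<union> P \<Longrightarrow> card {u. (u, v) \<in> used_arcs A x} = card {w. (v, w) \<in> used_arcs A x}"
  using inner_used_degrees[of v] by (metis of_nat_eq_iff)

lemma used_arc_continues: "(u, v) \<in> used_arcs A x \<Longrightarrow> v \<noteq> t \<Longrightarrow> \<exists>w. (v, w) \<in> used_arcs A x"
proof -
  assume uv: "(u, v) \<in> used_arcs A x" and "v \<noteq> t"
  then have "card {w. (v, w) \<in> used_arcs A x} = card {u. (u, v) \<in> used_arcs A x}"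
    using used_in_card_eq_out_card[OF used_arc_head_inner] by simp
  also have "\<dots> > 0"
    using uv finite_used_nbrs(2) by (auto simp: card_gt_0_iff)
  finally show ?thesis by (auto simp: card_gt_0_iff)
qed

lemma used_arc_preceded: "(v, w) \<in> used_arcs A x \<Longrightarrow> v \<noteq> s \<Longrightarrow> \<exists>u. (u, v) \<in> used_arcs A x"
proof -
  assume vw: "(v, w) \<in> used_arcs A x" and "v \<noteq> s"
  then have "card {u. (u, v) \<in> used_arcs A x} = card {w. (v, w) \<in> used_arcs A x}"
    using used_in_card_eq_out_card[OF used_arc_tail_inner] by simp
  also have "\<dots> > 0"
    using vw finite_used_nbrs(1) by (auto simp: card_gt_0_iff)
  finally show ?thesis by (auto simp: card_gt_0_iff)
qed

lemma z_eq_0_if_unused: "a \<in> A \<Longrightarrow> x a \<noteq> 1 \<Longrightarrow> z a = 0"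
proof -
  assume a: "a \<in> A" "x a \<noteq> 1"
  obtain i j where ij: "a = (i, j)" by (cases a)
  have "x a = 0" using x_01[OF a(1)] a(2) by simp
  then have "ereal (z a) \<le> 0"
    using z_upper[of i j] a ij by (simp add: zero_ereal_def[symmetric])
  then show ?thesis using z_nonneg[OF a(1)] by simp
qed

lemma sum_out_nbrs_used_arc:
  assumes "(v, w) \<in> used_arcs A x" "v \<noteq> s"
    and "\<And>j. (v, j) \<in> A \<Longrightarrow> x (v, j) \<noteq> 1 \<Longrightarrow> f j = 0"
  shows "(\<Sum>j\<in>out_nbrs N A v. f j) = f w"
proof -
  have "(\<Sum>j\<in>out_nbrs N A v. f j) = (\<Sum>j\<in>{w}. f j)"
  proof (rule sum.mono_neutral_right[OF finite_nbrs(1)])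
    show "{w} \<subseteq> out_nbrs N A v"
      using assms(1) used_arc_nodes by (auto simp: out_nbrs_def used_arcs_def)
    show "\<forall>j\<in>out_nbrs N A v - {w}. f j = 0"
      using assms used_out_arc_unique by (auto simp: out_nbrs_def used_arcs_def)
  qed
  then show ?thesis by simp
qed

lemma sum_in_nbrs_used_arc:
  assumes "(u, v) \<in> used_arcs A x" "v \<noteq> t"
    and "\<And>j. (j, v) \<in> A \<Longrightarrow> x (j, v) \<noteq> 1 \<Longrightarrow> f j = 0"
  shows "(\<Sum>j\<in>in_nbrs N A v. f j) = f u"
proof -
  have "(\<Sum>j\<in>in_nbrs N A v. f j) = (\<Sum>j\<in>{u}. f j)"
  proof (rule sum.mono_neutral_right[OF finite_nbrs(2)])
    show "{u} \<subseteq> in_nbrs N A v"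
      using assms(1) used_arc_nodes by (auto simp: in_nbrs_def used_arcs_def)
    show "\<forall>j\<in>in_nbrs N A v - {u}. f j = 0"
      using assms used_in_arc_unique by (auto simp: in_nbrs_def used_arcs_def)
  qed
  then show ?thesis by simp
qed

lemma z_source: "(s, w) \<in> used_arcs A x \<Longrightarrow> z (s, w) = d (s, w)"
proof -
  assume sw: "(s, w) \<in> used_arcs A x"
  then have "w \<in> out_nbrs N A s"
    using used_arc_nodes by (simp add: out_nbrs_def used_arcs_def)
  then show ?thesis
    using z_source_arc sw by (simp add: used_arcs_def)
qed

lemma z_step:
  assumes uv: "(u, v) \<in> used_arcs A x" and vw: "(v, w) \<in> used_arcs A x"
  shows "z (v, w) = z (u, v) + d (v, w)"
proof -
  have "v \<noteq> s" "v \<noteq> t"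
    using uv vw no_used_arc_into_source no_used_arc_out_of_sink by auto
  have "(\<Sum>j\<in>out_nbrs N A v. z (v, j)) = z (v, w)"
    using vw \<open>v \<noteq> s\<close> z_eq_0_if_unused by (rule sum_out_nbrs_used_arc)
  moreover have "(\<Sum>j\<in>in_nbrs N A v. z (j, v)) = z (u, v)"
    using uv \<open>v \<noteq> t\<close> z_eq_0_if_unused by (rule sum_in_nbrs_used_arc)
  moreover have "(\<Sum>j\<in>out_nbrs N A v. d (v, j) * x (v, j)) = d (v, w) * x (v, w)"
    using vw \<open>v \<noteq> s\<close> by (rule sum_out_nbrs_used_arc) (auto dest: x_01)
  ultimately show ?thesis
    using z_conservation[OF used_arc_head_inner[OF uv \<open>v \<noteq> t\<close>]] vw
    by (simp add: used_arcs_def)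
qed

lemma z_sink: "(u, t) \<in> used_arcs A x \<Longrightarrow> z (u, t) \<le> T"
  using z_upper[of u t] by (simp add: used_arcs_def Rdist_def)

sublocale unit_flow "used_arcs A x" s t z
proof unfold_locales
  show "finite (used_arcs A x)"
    using finite_instance_arcs by (simp add: used_arcs_def)
  show "z (u, v) < z (v, w)" if "(u, v) \<in> used_arcs A x" "(v, w) \<in> used_arcs A x" for u v w
  proof -
    have "d (v, w) > 0"
      using traverse_time_pos that(2) by (simp add: used_arcs_def)
    then show ?thesis using z_step[OF that] by simp
  qed
qed (fact no_used_arc_into_source no_used_arc_out_of_sink used_in_arc_unique used_out_arc_unique
       used_arc_continues used_arc_preceded)+

lemma z_eq_walk_cost:
  "is_walk (used_arcs A x) (vs @ [v]) \<Longrightarrow> vs \<noteq> [] \<Longrightarrow> hd vs = s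
    \<Longrightarrow> z (last vs, v) = walk_cost d (vs @ [v])"
proof (induction vs arbitrary: v rule: rev_induct)
  case (snoc u vs)
  show ?case
  proof (cases "vs = []")
    case True
    then show ?thesis
      using snoc.prems z_source by (simp add: is_walk_Cons walk_cost_def)
  next
    case False
    have "is_walk (used_arcs A x) (vs @ [u])" "(u, v) \<in> used_arcs A x"
      using snoc.prems(1) is_walk_snoc[of "vs @ [u]" "used_arcs A x" v] by simp_all
    moreover from this(1) have "(last vs, u) \<in> used_arcs A x"
      using False by (simp add: is_walk_snoc)
    ultimately show ?thesis
      using snoc.IH snoc.prems(3) False z_step walk_cost_snoc[of "vs @ [u]" d v] by simp
  qed
qed simp

lemma route_short_path: "route r \<Longrightarrow> is_path A s t r \<and> walk_cost d r \<le> T"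
proof -
  assume r: "route r"
  then have walk: "is_walk (used_arcs A x) r" and ends: "hd r = s" "last r = t"
    by (simp_all add: route_def)
  obtain vs where vs: "r = vs @ [t]"
    using walk ends by (cases r rule: rev_cases) (auto simp: is_walk_def)
  with ends source_ne_sink have "vs \<noteq> []" by auto
  then have "(last vs, t) \<in> used_arcs A x" "hd vs = s"
    using walk ends vs by (simp_all add: is_walk_snoc)
  then have "walk_cost d r \<le> T"
    using z_eq_walk_cost z_sink walk vs \<open>vs \<noteq> []\<close> by metis
  moreover have "is_walk A r"
    using walk by (rule is_walk_mono) (auto simp: used_arcs_def)
  ultimately show ?thesis
    using walk_from_source_distinct[OF walk] ends by (simp add: is_path_def)
qed

lemma route_through_inner: "v \<in> S \<union> P \<Longrightarrow> y v = 1 \<Longrightarrow> \<exists>r. route r \<and> v \<in> set r"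
proof -
  assume "v \<in> S \<union> P" "y v = 1"
  then have "card {u. (u, v) \<in> used_arcs A x} \<noteq> 0"
    using inner_used_degrees(1) by force
  then obtain u where "(u, v) \<in> used_arcs A x"
    by (metis (no_types, lifting) card.empty empty_Collect_eq)
  then obtain r where "route r" "(u, v) \<in> walk_arcs r"
    using route_through_arc by blast
  then show ?thesis using walk_arcs_subset by blast
qed

lemma route_meets_delta_in:
  assumes "route r" "V \<subseteq> N - {s}" "v \<in> set r" "v \<in> V"
  shows "walk_arcs r \<inter> delta_in N A V \<noteq> {}"
proof -
  have "hd r \<notin> V" using assms(1,2) by (auto simp: route_def)
  then obtain a b where ab: "(a, b) \<in> walk_arcs r" "a \<notin> V" "b \<in> V"
    using walk_arcs_enter[OF _ assms(3,4)] by auto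
  then have "(a, b) \<in> used_arcs A x" using walk_arcs_route[OF assms(1)] by blast
  then have "(a, b) \<in> delta_in N A V"
    using ab used_arc_nodes[of a b] by (simp add: delta_in_def used_arcs_def)
  then show ?thesis using ab(1) by blast
qed

lemma route_meets_delta_out:
  assumes "route r" "V \<subseteq> N - {t}" "v \<in> set r" "v \<in> V"
  shows "walk_arcs r \<inter> delta_out N A V \<noteq> {}"
proof -
  have "last r \<notin> V" using assms(1,2) by (auto simp: route_def)
  then obtain a b where ab: "(a, b) \<in> walk_arcs r" "a \<in> V" "b \<notin> V"
    using walk_arcs_leave[OF assms(3,4)] by auto
  then have "(a, b) \<in> used_arcs A x" using walk_arcs_route[OF assms(1)] by blast
  then have "(a, b) \<in> delta_out N A V"
    using ab used_arc_nodes[of a b] by (simp add: delta_out_def used_arcs_def)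
  then show ?thesis using ab(1) by blast
qed

lemma conflict_pair_le_cut:
  assumes conflict: "(i, j) \<in> conflict_pairs N A s t d T" and "C \<subseteq> A"
    and meets: "\<And>r v. route r \<Longrightarrow> v \<in> {i, j} \<Longrightarrow> v \<in> set r \<Longrightarrow> walk_arcs r \<inter> C \<noteq> {}"
  shows "y i + y j \<le> (\<Sum>e\<in>C. x e)"
proof -
  have no_common_route: "\<not> (i \<in> set r \<and> j \<in> set r)" if "route r" for r
    using route_short_path[OF that] conflict by (auto simp: conflict_pairs_def)
  have inner: "i \<in> S \<union> P" "j \<in> S \<union> P"
    using conflict nodes_eq by (auto simp: conflict_pairs_def)
  let ?R = "{v \<in> {i, j}. \<exists>r. route r \<and> v \<in> set r}"
  have "card ?R \<le> card (C \<inter> used_arcs A x)"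
    using meets no_common_route by (intro card_routed_le_card_cut) auto
  also have "card (C \<inter> used_arcs A x) = (\<Sum>e\<in>C. x e)"
  proof -
    have "finite C"
      using \<open>C \<subseteq> A\<close> finite_instance_arcs by (rule finite_subset)
    moreover have "{e \<in> C. x e = 1} = C \<inter> used_arcs A x"
      using \<open>C \<subseteq> A\<close> by (auto simp: used_arcs_def)
    ultimately show ?thesis
      using x_01 \<open>C \<subseteq> A\<close> by (subst sum_01_eq_card) auto
  qed
  finally have cut: "card ?R \<le> (\<Sum>e\<in>C. x e)" by simp
  show ?thesis
  proof (cases "i = j")
    case True
    then have "y i = 0"
      using y_01 inner nodes_eq route_through_inner no_common_route by blast
    then show ?thesis using True cut by simp
  next
    case False
    have "y i + y j = (\<Sum>v\<in>{i, j}. y v)" using False by simp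
    also have "\<dots> = card {v \<in> {i, j}. y v = 1}"
      using y_01 inner nodes_eq by (intro sum_01_eq_card) auto
    also have "\<dots> \<le> card ?R"
    proof -
      have "{v \<in> {i, j}. y v = 1} \<subseteq> ?R" using route_through_inner inner by auto
      then show ?thesis by (simp add: card_mono)
    qed
    finally show ?thesis using cut by linarith
  qed
qed

end

theorem corollary3:
  fixes N :: "'v set" and A :: "('v \<times> 'v) set" and s t :: 'v and S P :: "'v set"
    and p :: "'v \<Rightarrow> int" and d :: "'v \<times> 'v \<Rightarrow> real" and m :: nat and T :: real
    and x :: "'v \<times> 'v \<Rightarrow> real" and y :: "'v \<Rightarrow> real" and z :: "'v \<times> 'v \<Rightarrow> real" and \<phi> :: real
  assumes "stop_instance N A s t S P p d m T"
    and "F1_feasible N A s t S P d m T x y z \<phi>"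
    and "(i, j) \<in> conflict_pairs N A s t d T"
  shows "(\<forall>V. V \<subseteq> N - {s} \<and> {i, j} \<subseteq> V \<longrightarrow> (\<Sum>e\<in>delta_in N A V. x e) \<ge> y i + y j)
       \<and> (\<forall>V. V \<subseteq> N - {t} \<and> {i, j} \<subseteq> V \<longrightarrow> (\<Sum>e\<in>delta_out N A V. x e) \<ge> y i + y j)"
proof -
  interpret F1_solution N A s t S P p d m T x y z \<phi>
    using assms(1,2) by unfold_locales
  have "y i + y j \<le> (\<Sum>e\<in>delta_in N A V. x e)" if V: "V \<subseteq> N - {s}" "{i, j} \<subseteq> V" for V
  proof (rule conflict_pair_le_cut[OF assms(3)])
    show "delta_in N A V \<subseteq> A" by (auto simp: delta_in_def)
    fix r v assume "route r" "v \<in> {i, j}" "v \<in> set r"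
    then show "walk_arcs r \<inter> delta_in N A V \<noteq> {}"
      using route_meets_delta_in V by blast
  qed
  moreover have "y i + y j \<le> (\<Sum>e\<in>delta_out N A V. x e)" if V: "V \<subseteq> N - {t}" "{i, j} \<subseteq> V" for V
  proof (rule conflict_pair_le_cut[OF assms(3)])
    show "delta_out N A V \<subseteq> A" by (auto simp: delta_out_def)
    fix r v assume "route r" "v \<in> {i, j}" "v \<in> set r"
    then show "walk_arcs r \<inter> delta_out N A V \<noteq> {}"
      using route_meets_delta_out V by blast
  qed
  ultimately show ?thesis by blast
qed

end
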